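(* In the two-tier residency matching game described in the context (list length $K$, high-match value $v>1$), under the large market approximation, if a symmetric equilibrium exists for high doctors, then it is either an equilibrium in pure strategies, or a mixed strategy equilibrium in which high doctors randomize between two consecutive strategies $(k,K-k)$ and $(k+1,K-k-1)$ for some integer $k$.
   Context: Model: there are high-tier and low-tier doctors and high-tier and low-tier hospitals, each hospital having one position. Every hospital prefers every high doctor to every low doctor, and every doctor prefers every high hospital to every low hospital; within a tier, preferences are independent uniformly random permutations. Each doctor submits a ranked list of exactly $K$ hospitals; hospitals submit full true rankings; doctor-proposing deferred acceptance is run. A doctor's strategy is a pair $(k,K-k)$: he lists his $k$ most preferred high hospitals followed by his $K-k$ most preferred low hospitals. A doctor gets value $v>1$ if matched to a high hospital, $1$ if matched to a low one, $0$ otherwise. Large market approximation: in the limit of many agents (tier proportions, $K$, $v$ fixed), given the strategy profile, each application of a high doctor to a high (resp. low) hospital is accepted independently with a probability $p$ (resp. $p'$) determined by the aggregate profile via fixed-point equations (expected matched doctors = expected hospitals receiving at least one application, a hospital with on average $\lambda$ applications receiving none with probability $e^{-\lambda}$), and unaffected by an individual doctor's choice. Since hospitals rank all high doctors above low ones, the high doctors' assignment does not depend on low doctors. A symmetric equilibrium for high doctors is a (possibly mixed) strategy used by all high doctors such that every strategy in its support maximizes a high doctor's expected value given $p,p'$. *)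

theory Defs
  imports Complex_Main
begin

text \<open>A (mixed) strategy profile of high doctors
is a probability vector sig over the pure strategies k = 0..K, where pure strategy k
means the list (k, K-k). The parameters p and p' are the acceptance probabilities of
an application of a high doctor to a high resp. low hospital.\<close>

definition is_mixed_strategy :: "nat \<Rightarrow> (nat \<Rightarrow> real) \<Rightarrow> bool" where
  "is_mixed_strategy K sig \<longleftrightarrow>
     (\<forall>k. 0 \<le> sig k) \<and> (\<forall>k>K. sig k = 0) \<and> (\<Sum>k\<le>K. sig k) = 1"

text \<open>Expected value of pure strategy (k, K-k): the doctor applies down his list and
ends at the first hospital that accepts him; each application to a high (low)
hospital is accepted independently with probability p (p').\<close>
definition strat_value :: "real \<Rightarrow> nat \<Rightarrow> real \<Rightarrow> real \<Rightarrow> nat \<Rightarrow> real" where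
  "strat_value v K p p' k =
     v * (1 - (1 - p) ^ k) + (1 - p) ^ k * (1 - (1 - p') ^ (K - k))"

definition match_high :: "nat \<Rightarrow> (nat \<Rightarrow> real) \<Rightarrow> real \<Rightarrow> real" where
  "match_high K sig p = (\<Sum>k\<le>K. sig k * (1 - (1 - p) ^ k))"

definition match_low :: "nat \<Rightarrow> (nat \<Rightarrow> real) \<Rightarrow> real \<Rightarrow> real \<Rightarrow> real" where
  "match_low K sig p p' = (\<Sum>k\<le>K. sig k * ((1 - p) ^ k * (1 - (1 - p') ^ (K - k))))"

text \<open>Fixed-point equations. dH, hH, hL are the masses (proportions) of high doctors,
high hospitals and low hospitals. Each matched doctor made on average 1/p applications
to high hospitals (geometric), so the total number of applications to high hospitals is
dH * match_high / p, i.e. lambda = that divided by hH per hospital; a hospital receives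
no application with probability exp(-lambda). Expected matched doctors = expected
hospitals receiving at least one application.\<close>
definition fixed_point :: "real \<Rightarrow> real \<Rightarrow> real \<Rightarrow> nat \<Rightarrow> (nat \<Rightarrow> real) \<Rightarrow> real \<Rightarrow> real \<Rightarrow> bool" where
  "fixed_point dH hH hL K sig p p' \<longleftrightarrow>
     dH * match_high K sig p = hH * (1 - exp (- (dH * match_high K sig p / p) / hH)) \<and>
     dH * match_low K sig p p' = hL * (1 - exp (- (dH * match_low K sig p p' / p') / hL))"

definition sym_equilibrium :: "real \<Rightarrow> nat \<Rightarrow> (nat \<Rightarrow> real) \<Rightarrow> real \<Rightarrow> real \<Rightarrow> bool" where
  "sym_equilibrium v K sig p p' \<longleftrightarrow>
     is_mixed_strategy K sig \<and>
     (\<forall>k\<le>K. 0 < sig k \<longrightarrow> (\<forall>j\<le>K. strat_value v K p p' j \<le> strat_value v K p p' k))"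

definition support :: "nat \<Rightarrow> (nat \<Rightarrow> real) \<Rightarrow> nat set" where
  "support K sig = {k. k \<le> K \<and> 0 < sig k}"

end

theory Submission
  imports Defs
begin

text \<open>Moving one application from a low to a high hospital, i.e. from strategy \<open>k\<close> to
\<open>k + 1\<close>, changes the value by \<open>(1 - p)^k\<close> times the marginal gain
\<open>(v - 1) p + (p - p') (1 - p')^(K - k - 1)\<close>. This gain is single crossing in \<open>k\<close>: where it
is not positive it is strictly decreasing. A support point \<open>a\<close> forces the gain at \<open>a\<close> to be
nonpositive and a support point \<open>b\<close> forces the gain at \<open>b - 1\<close> to be nonnegative, so
\<open>b \<le> a + 1\<close>. When \<open>p = 1\<close> all strategies with \<open>k \<ge> 1\<close> tie and this argument fails; but then
the fixed-point equation for high hospitals reads \<open>y = 1 - exp (- y)\<close>, whose only solution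
\<open>y = 0\<close> says that nobody applies to a high hospital.\<close>

definition marginal_gain :: "real \<Rightarrow> nat \<Rightarrow> real \<Rightarrow> real \<Rightarrow> nat \<Rightarrow> real" where
  "marginal_gain v K p p' k = (v - 1) * p + (p - p') * (1 - p') ^ (K - Suc k)"

lemma strat_value_Suc_minus:
  assumes "k < K"
  shows "strat_value v K p p' (Suc k) - strat_value v K p p' k
       = (1 - p) ^ k * marginal_gain v K p p' k"
proof -
  have "K - k = Suc (K - Suc k)" using assms by simp
  then have split_power: "(1 - p') ^ (K - k) = (1 - p') * (1 - p') ^ (K - Suc k)" by simp
  show ?thesis
    unfolding strat_value_def marginal_gain_def split_power by (simp add: algebra_simps)
qed

lemma marginal_gain_single_crossing:
  assumes "v > 1" "0 < p" "p' \<le> 1" "j < k" "k < K"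
  shows "0 < marginal_gain v K p p' j \<or> marginal_gain v K p p' k < marginal_gain v K p p' j"
proof -
  have pos: "0 < (v - 1) * p" using assms by simp
  consider "p' \<le> p" | "p < p'" "p' = 1" | "p < p'" "p' < 1" using assms(3) by linarith
  then show ?thesis
  proof cases
    case 1
    then have "0 \<le> (p - p') * (1 - p') ^ (K - Suc j)" using assms by simp
    then show ?thesis using pos unfolding marginal_gain_def by linarith
  next
    case 2
    then have "(p - p') * (1 - p') ^ (K - Suc j) = 0" using assms by simp
    then show ?thesis using pos unfolding marginal_gain_def by linarith
  next
    case 3
    have "(1 - p') ^ (K - Suc j) < (1 - p') ^ (K - Suc k)"
      using 3 assms by (intro power_strict_decreasing) auto
    then have "(p - p') * (1 - p') ^ (K - Suc k) < (p - p') * (1 - p') ^ (K - Suc j)"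
      using 3 by (simp add: mult_strict_left_mono_neg)
    then show ?thesis unfolding marginal_gain_def by linarith
  qed
qed

lemma equilibrium_marginal_gain_nonpos:
  assumes "sym_equilibrium v K sig p p'" "p < 1" "a < K" "0 < sig a"
  shows "marginal_gain v K p p' a \<le> 0"
proof -
  have "strat_value v K p p' (Suc a) \<le> strat_value v K p p' a"
    using assms unfolding sym_equilibrium_def by auto
  then have "(1 - p) ^ a * marginal_gain v K p p' a \<le> 0"
    using strat_value_Suc_minus[OF \<open>a < K\<close>, of v p p'] by linarith
  moreover have "0 < (1 - p) ^ a" using \<open>p < 1\<close> by simp
  ultimately show ?thesis by (simp add: mult_le_0_iff)
qed

lemma equilibrium_marginal_gain_nonneg:
  assumes "sym_equilibrium v K sig p p'" "p < 1" "b < K" "0 < sig (Suc b)"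
  shows "0 \<le> marginal_gain v K p p' b"
proof -
  have "strat_value v K p p' b \<le> strat_value v K p p' (Suc b)"
    using assms unfolding sym_equilibrium_def by auto
  then have "0 \<le> (1 - p) ^ b * marginal_gain v K p p' b"
    using strat_value_Suc_minus[OF \<open>b < K\<close>, of v p p'] by linarith
  moreover have "0 < (1 - p) ^ b" using \<open>p < 1\<close> by simp
  ultimately show ?thesis by (simp add: zero_le_mult_iff)
qed

lemma equilibrium_support_consecutive:
  assumes "sym_equilibrium v K sig p p'" "v > 1" "0 < p" "p < 1" "p' \<le> 1"
    and "a \<in> support K sig" "b \<in> support K sig" "a < b"
  shows "b = a + 1"
proof (rule ccontr)
  assume "b \<noteq> a + 1"
  then obtain c where c: "b = Suc c" "a < c" "c < K"
    using assms(6-8) unfolding support_def by (cases b) auto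
  have "marginal_gain v K p p' a \<le> 0"
    using assms(6) c by (intro equilibrium_marginal_gain_nonpos[OF assms(1,4)]) (auto simp: support_def)
  moreover have "0 \<le> marginal_gain v K p p' c"
    using assms(7) c by (intro equilibrium_marginal_gain_nonneg[OF assms(1,4)]) (auto simp: support_def)
  ultimately show False
    using marginal_gain_single_crossing[OF assms(2,3,5) c(2,3)] by linarith
qed

lemma finite_nat_set_singleton_or_consecutive_pair:
  fixes S :: "nat set"
  assumes "finite S" "S \<noteq> {}" "\<forall>x\<in>S. x \<le> K"
    and consecutive: "\<And>a b. a \<in> S \<Longrightarrow> b \<in> S \<Longrightarrow> a < b \<Longrightarrow> b = a + 1"
  shows "(\<exists>k. S = {k}) \<or> (\<exists>k. k + 1 \<le> K \<and> S = {k, k + 1})"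
proof -
  define k where "k = Min S"
  have "k \<in> S" and k_min: "\<And>x. x \<in> S \<Longrightarrow> k \<le> x"
    using assms(1,2) by (simp_all add: k_def)
  have "S \<subseteq> {k, k + 1}"
    using consecutive[OF \<open>k \<in> S\<close>] k_min by (force simp: le_less)
  then consider "S = {k}" | "S = {k, k + 1}"
    using \<open>k \<in> S\<close> by blast
  then show ?thesis using assms(3) by cases auto
qed

lemma support_nonempty:
  assumes "is_mixed_strategy K sig"
  shows "support K sig \<noteq> {}"
proof
  assume "support K sig = {}"
  then have "\<forall>k\<le>K. sig k = 0"
    using assms unfolding support_def is_mixed_strategy_def by (auto simp: le_less)
  then show False using assms unfolding is_mixed_strategy_def by simp
qed

lemma fixed_point_full_acceptance_match_high_eq_0:
  assumes "fixed_point dH hH hL K sig 1 p'" "dH > 0" "hH > 0"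
  shows "match_high K sig 1 = 0"
proof -
  define y where "y = dH * match_high K sig 1 / hH"
  have "1 - y = exp (- y)"
    using assms unfolding fixed_point_def y_def by (simp add: field_simps)
  then have "y = 0" using exp_minus_greater[of y] by simp
  then show ?thesis using assms(2,3) unfolding y_def by simp
qed

lemma support_eq_0_if_match_high_eq_0:
  assumes "is_mixed_strategy K sig" "match_high K sig 1 = 0"
  shows "support K sig = {0}"
proof -
  have terms_nonneg: "\<And>k. 0 \<le> sig k * (1 - (1 - 1) ^ k)"
    using assms(1) unfolding is_mixed_strategy_def by (auto simp: power_0_left)
  have "\<forall>k\<in>{..K}. sig k * (1 - (1 - 1) ^ k) = 0"
    using assms(2) terms_nonneg unfolding match_high_def by (simp only: sum_nonneg_eq_0_iff finite_atMost)
  then have "support K sig \<subseteq> {0}"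
    unfolding support_def by (auto simp: power_0_left split: if_splits)
  then show ?thesis using support_nonempty[OF assms(1)] by blast
qed

theorem lemma1:
  fixes v dH hH hL p p' :: real and K :: nat and sig :: "nat \<Rightarrow> real"
  assumes "v > 1"
    and "dH > 0" and "hH > 0" and "hL > 0"
    and "0 < p" and "p \<le> 1" and "0 < p'" and "p' \<le> 1"
    and "fixed_point dH hH hL K sig p p'"
    and "sym_equilibrium v K sig p p'"
  shows "(\<exists>k. support K sig = {k})
       \<or> (\<exists>k. k + 1 \<le> K \<and> support K sig = {k, k + 1})"
proof -
  have mixed: "is_mixed_strategy K sig"
    using assms(10) unfolding sym_equilibrium_def by blast
  show ?thesis
  proof (cases "p = 1")
    case True
    then have "match_high K sig 1 = 0"
      using fixed_point_full_acceptance_match_high_eq_0 assms(2,3,9) by blast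
    then show ?thesis using support_eq_0_if_match_high_eq_0[OF mixed] by blast
  next
    case False
    then show ?thesis
      using equilibrium_support_consecutive[OF assms(10,1,5) _ assms(8)] assms(6)
      by (intro finite_nat_set_singleton_or_consecutive_pair support_nonempty[OF mixed])
         (auto simp: support_def)
  qed
qed

end
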